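(* Let $J_1,J_2$ be either the value functions $J_{\mathcal{R}_1},J_{\mathcal{R}_2}$ of two reward functions in a fixed environment, or the value functions $J_{\mathcal{T}_1},J_{\mathcal{T}_2}$ of two transition models in a fixed task. Let $\Pi$ be a set of stationary policies containing a nonempty open subset of $\Pi^+$, and suppose $J_1,J_2$ are both non-trivial on $\Pi$ and not equivalent on $\Pi$. Then $J_1$ and $J_2$ admit a value inversion on $\Pi$: there exist $\pi,\pi'\in\Pi$ with $J_1(\pi)>J_1(\pi')$ and $J_2(\pi')>J_2(\pi)$.
   Context: Setting: MDPs $(\mathcal{S},\mathcal{A},\mathcal{T},d_0,\mathcal{R},\gamma)$ with finite $\mathcal{S}$, finite $\mathcal{A}$ with $|\mathcal{A}|>1$, $\gamma\in[0,1)$, all states reachable. An environment is an MDP without reward; a task is an MDP without transition model. Stationary policies $\pi:\mathcal{S}\to\Delta(\mathcal{A})$ are identified with $\Delta(\mathcal{A})^{|\mathcal{S}|}\subset\mathbb{R}^{\mathcal{S}\times\mathcal{A}}$; $\Pi^+$ is the set of those with $\pi(a\mid s)>0$ for all $s,a$, and "open" means open in $\Pi^+$. $J(\pi)=\mathbb{E}\big[\sum_{t\ge0}\gamma^t\mathcal{R}(s_t,a_t)\big]$ ($s_0\sim d_0$, $a_t\sim\pi(\cdot\mid s_t)$, $s_{t+1}\sim\mathcal{T}(\cdot\mid s_t,a_t)$); $J_{\mathcal{R}}$ denotes this with reward $\mathcal{R}$ in a fixed environment, $J_{\mathcal{T}}$ with transition model $\mathcal{T}$ in a fixed task. $J$ is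 trivial on $\Pi$ if constant on $\Pi$; $J_1,J_2$ are equivalent on $\Pi$ if for all $\pi,\pi'\in\Pi$, $J_1(\pi)\ge J_1(\pi')\iff J_2(\pi)\ge J_2(\pi')$. *)

theory Defs
  imports "HOL-Analysis.Analysis"
begin

text \<open>A stationary policy is \<pi> :: 's => 'a => real with \<pi> s a = \<pi>(a|s).
  A transition model is T :: 's => 'a => 's => real with T s a s' = T(s'|s,a).\<close>

definition is_dist :: "('b::finite \<Rightarrow> real) \<Rightarrow> bool" where
  "is_dist p \<longleftrightarrow> (\<forall>x. p x \<ge> 0) \<and> (\<Sum>x\<in>UNIV. p x) = 1"

definition policies :: "('s::finite \<Rightarrow> 'a::finite \<Rightarrow> real) set" where
  "policies = {\<pi>. \<forall>s. is_dist (\<pi> s)}"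

definition policies_pos :: "('s::finite \<Rightarrow> 'a::finite \<Rightarrow> real) set" where
  "policies_pos = {\<pi> \<in> policies. \<forall>s a. \<pi> s a > 0}"

definition is_transition :: "('s::finite \<Rightarrow> 'a::finite \<Rightarrow> 's \<Rightarrow> real) \<Rightarrow> bool" where
  "is_transition T \<longleftrightarrow> (\<forall>s a. is_dist (T s a))"

fun state_dist :: "('s::finite \<Rightarrow> 'a::finite \<Rightarrow> 's \<Rightarrow> real) \<Rightarrow> ('s \<Rightarrow> real)
    \<Rightarrow> ('s \<Rightarrow> 'a \<Rightarrow> real) \<Rightarrow> nat \<Rightarrow> 's \<Rightarrow> real" where
  "state_dist T d0 \<pi> 0 = d0"
| "state_dist T d0 \<pi> (Suc t) =
     (\<lambda>s'. \<Sum>s\<in>UNIV. \<Sum>a\<in>UNIV. state_dist T d0 \<pi> t s * \<pi> s a * T s a s')"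

definition all_reachable :: "('s::finite \<Rightarrow> 'a::finite \<Rightarrow> 's \<Rightarrow> real) \<Rightarrow> ('s \<Rightarrow> real) \<Rightarrow> bool" where
  "all_reachable T d0 \<longleftrightarrow> (\<forall>s. \<exists>\<pi>\<in>policies. \<exists>t. state_dist T d0 \<pi> t s > 0)"

definition valid_mdp :: "('s::finite \<Rightarrow> 'a::finite \<Rightarrow> 's \<Rightarrow> real) \<Rightarrow> ('s \<Rightarrow> real)
    \<Rightarrow> real \<Rightarrow> bool" where
  "valid_mdp T d0 \<gamma> \<longleftrightarrow> is_transition T \<and> is_dist d0 \<and> 0 \<le> \<gamma> \<and> \<gamma> < 1 \<and> all_reachable T d0"

definition J :: "('s::finite \<Rightarrow> 'a::finite \<Rightarrow> 's \<Rightarrow> real) \<Rightarrow> ('s \<Rightarrow> real)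
    \<Rightarrow> ('s \<Rightarrow> 'a \<Rightarrow> real) \<Rightarrow> real \<Rightarrow> ('s \<Rightarrow> 'a \<Rightarrow> real) \<Rightarrow> real" where
  "J T d0 R \<gamma> \<pi> = (\<Sum>t. \<gamma> ^ t * (\<Sum>s\<in>UNIV. \<Sum>a\<in>UNIV. state_dist T d0 \<pi> t s * \<pi> s a * R s a))"

definition trivial_on :: "('p \<Rightarrow> real) \<Rightarrow> 'p set \<Rightarrow> bool" where
  "trivial_on f P \<longleftrightarrow> (\<forall>x\<in>P. \<forall>y\<in>P. f x = f y)"

definition equivalent_on :: "('p \<Rightarrow> real) \<Rightarrow> ('p \<Rightarrow> real) \<Rightarrow> 'p set \<Rightarrow> bool" where
  "equivalent_on f g P \<longleftrightarrow> (\<forall>x\<in>P. \<forall>y\<in>P. f x \<ge> f y \<longleftrightarrow> g x \<ge> g y)"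

end

theory Submission
  imports Defs "HOL-Computational_Algebra.Polynomial"
begin

text \<open>
  Along a segment between two policies that differ in a single state, the value is a linear
  fractional function of the mixing parameter, because the Bellman equation changes by a rank-one
  perturbation. Suppose there is no value inversion. Near an interior policy choose such a segment
  along which \<open>J\<^sub>2\<close> strictly increases; \<open>J\<^sub>1\<close> must then follow \<open>J\<^sub>2\<close> monotonically, and every
  nearby policy has the same pair of values as some point of the segment. Eliminating the
  parameter gives a relation \<open>J\<^sub>1 (c J\<^sub>2 + d) = a J\<^sub>2 + b\<close> on an open set. Along one-state segments
  such a relation is a polynomial identity in the parameter, so it spreads from the open set to
  all policies, and with positive determinant it makes \<open>J\<^sub>1\<close> an increasing function of \<open>J\<^sub>2\<close>.

  Only continuity and this linear fractional structure of the two value functions are used.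
\<close>

section \<open>Distributions and Bellman equations\<close>

lemma is_dist_nonneg: "is_dist p \<Longrightarrow> 0 \<le> p x"
  by (simp add: is_dist_def)

lemma is_dist_le_one:
  assumes "is_dist p" shows "p x \<le> 1"
proof -
  have "p x \<le> (\<Sum>y\<in>UNIV. p y)"
    by (rule member_le_sum) (use assms in \<open>auto simp: is_dist_def\<close>)
  then show ?thesis using assms by (simp add: is_dist_def)
qed

lemma abs_expectation_le:
  assumes p: "is_dist p" and bound: "\<And>x. \<bar>f x\<bar> \<le> c"
  shows "\<bar>\<Sum>x\<in>UNIV. p x * f x\<bar> \<le> c"
proof -
  have "\<bar>\<Sum>x\<in>UNIV. p x * f x\<bar> \<le> (\<Sum>x\<in>UNIV. p x * \<bar>f x\<bar>)"
    using sum_abs[of "\<lambda>x. p x * f x" UNIV] is_dist_nonneg[OF p] by (simp add: abs_mult)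
  also have "\<dots> \<le> (\<Sum>x\<in>UNIV. p x * c)"
    by (intro sum_mono mult_left_mono bound is_dist_nonneg[OF p])
  also have "\<dots> = c"
    using p by (simp add: is_dist_def flip: sum_distrib_right)
  finally show ?thesis .
qed

lemma is_dist_mixture:
  fixes p :: "'b::finite \<Rightarrow> real" and K :: "'b \<Rightarrow> 'c::finite \<Rightarrow> real"
  assumes p: "is_dist p" and K: "\<And>x. is_dist (K x)"
  shows "is_dist (\<lambda>y. \<Sum>x\<in>UNIV. p x * K x y)"
proof -
  have "(\<Sum>y\<in>UNIV. \<Sum>x\<in>UNIV. p x * K x y) = (\<Sum>x\<in>UNIV. p x * (\<Sum>y\<in>UNIV. K x y))"
    by (subst sum.swap) (simp add: sum_distrib_left)
  then show ?thesis
    using p K by (auto simp: is_dist_def intro!: sum_nonneg)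
qed

lemma policy_is_dist: "\<pi> \<in> policies \<Longrightarrow> is_dist (\<pi> s)"
  by (simp add: policies_def)

definition policy_reward :: "('s::finite \<Rightarrow> 'a::finite \<Rightarrow> real) \<Rightarrow> ('s \<Rightarrow> 'a \<Rightarrow> real) \<Rightarrow> 's \<Rightarrow> real"
  where "policy_reward R \<pi> s = (\<Sum>a\<in>UNIV. \<pi> s a * R s a)"

definition policy_kernel :: "('s::finite \<Rightarrow> 'a::finite \<Rightarrow> 's \<Rightarrow> real) \<Rightarrow> ('s \<Rightarrow> 'a \<Rightarrow> real) \<Rightarrow> 's \<Rightarrow> 's \<Rightarrow> real"
  where "policy_kernel T \<pi> s s' = (\<Sum>a\<in>UNIV. \<pi> s a * T s a s')"

definition bellman :: "('s::finite \<Rightarrow> 'a::finite \<Rightarrow> 's \<Rightarrow> real) \<Rightarrow> ('s \<Rightarrow> 'a \<Rightarrow> real) \<Rightarrow> real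
    \<Rightarrow> ('s \<Rightarrow> 'a \<Rightarrow> real) \<Rightarrow> ('s \<Rightarrow> real) \<Rightarrow> 's \<Rightarrow> real"
  where "bellman T R \<gamma> \<pi> V s = policy_reward R \<pi> s + \<gamma> * (\<Sum>s'\<in>UNIV. policy_kernel T \<pi> s s' * V s')"

definition stochastic :: "('s::finite \<Rightarrow> 's \<Rightarrow> real) \<Rightarrow> bool"
  where "stochastic M \<longleftrightarrow> (\<forall>s. is_dist (M s))"

lemma stochastic_policy_kernel:
  "is_transition T \<Longrightarrow> \<pi> \<in> policies \<Longrightarrow> stochastic (policy_kernel T \<pi>)"
  unfolding stochastic_def policy_kernel_def is_transition_def
  using is_dist_mixture[OF policy_is_dist] by blast

lemma state_dist_Suc_kernel:
  "state_dist T d0 \<pi> (Suc t) = (\<lambda>s'. \<Sum>s\<in>UNIV. state_dist T d0 \<pi> t s * policy_kernel T \<pi> s s')"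
  by (simp add: policy_kernel_def sum_distrib_left mult.assoc)

lemma is_dist_state_dist:
  assumes "is_transition T" "is_dist d0" "\<pi> \<in> policies"
  shows "is_dist (state_dist T d0 \<pi> t)"
proof (induction t)
  case 0
  then show ?case using assms(2) by simp
next
  case (Suc t)
  show ?case
    unfolding state_dist_Suc_kernel using Suc stochastic_policy_kernel[OF assms(1,3)]
    by (intro is_dist_mixture) (auto simp: stochastic_def)
qed

text \<open>The discounted operator \<open>V \<mapsto> \<gamma> M V\<close> is a contraction in the maximum norm.\<close>
lemma discounted_fixpoint_eq_zero:
  assumes M: "stochastic M" and \<gamma>: "0 \<le> \<gamma>" "\<gamma> < 1"
    and V: "\<And>s. V s = \<gamma> * (\<Sum>s'\<in>UNIV. M s s' * V s')"
  shows "V = (\<lambda>_. 0)"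
proof -
  define m where "m = Max (range (\<lambda>s. \<bar>V s\<bar>))"
  have le_m: "\<bar>V s\<bar> \<le> m" for s
    unfolding m_def by (rule Max_ge) auto
  have "m \<in> range (\<lambda>s. \<bar>V s\<bar>)"
    unfolding m_def by (rule Max_in) auto
  then obtain s0 where s0: "\<bar>V s0\<bar> = m" by auto
  have "m = \<gamma> * \<bar>\<Sum>s'\<in>UNIV. M s0 s' * V s'\<bar>"
    using s0 V[of s0] \<gamma> by (simp add: abs_mult)
  also have "\<dots> \<le> \<gamma> * m"
    using M le_m \<gamma> by (intro mult_left_mono abs_expectation_le) (auto simp: stochastic_def)
  finally have "m \<le> 0"
    using \<gamma> by (simp add: mult_le_cancel_right1)
  then have "\<bar>V s\<bar> \<le> 0" for s
    using le_m order_trans by blast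
  then show ?thesis by (simp add: fun_eq_iff)
qed

lemma discounted_fixpoint_exists:
  fixes M :: "'s::finite \<Rightarrow> 's \<Rightarrow> real"
  assumes M: "stochastic M" and \<gamma>: "0 \<le> \<gamma>" "\<gamma> < 1"
  shows "\<exists>V. \<forall>s. V s = \<rho> s + \<gamma> * (\<Sum>s'\<in>UNIV. M s s' * V s')"
proof -
  define L :: "real^'s \<Rightarrow> real^'s"
    where "L v = (\<chi> s. v$s - \<gamma> * (\<Sum>s'\<in>UNIV. M s s' * v$s'))" for v
  have "linear L"
  proof (rule linearI)
    fix v w :: "real^'s" and c :: real
    show "L (v + w) = L v + L w"
      by (simp add: L_def vec_eq_iff sum.distrib distrib_left)
    show "L (c *\<^sub>R v) = c *\<^sub>R L v"
      by (simp add: L_def vec_eq_iff sum_distrib_left right_diff_distrib mult.left_commute)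
  qed
  moreover have "v = 0" if "L v = 0" for v
  proof -
    have Lv: "L v $ s = 0" for s
      using that by simp
    have "v$s = \<gamma> * (\<Sum>s'\<in>UNIV. M s s' * v$s')" for s
      using Lv[of s] unfolding L_def vec_lambda_beta by linarith
    then have "(\<lambda>s. v$s) = (\<lambda>_. 0)"
      by (rule discounted_fixpoint_eq_zero[OF M \<gamma>])
    then show ?thesis by (simp add: vec_eq_iff fun_eq_iff)
  qed
  ultimately have "surj L"
    using eucl.linear_inj_imp_surj linear_injective_0 by blast
  then obtain v where "L v = (\<chi> s. \<rho> s)"
    using surjD by metis
  then have Lv: "L v $ s = \<rho> s" for s
    by simp
  have "v$s = \<rho> s + \<gamma> * (\<Sum>s'\<in>UNIV. M s s' * v$s')" for s
    using Lv[of s] unfolding L_def vec_lambda_beta by linarith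
  then show ?thesis by blast
qed

lemma bellman_fixpoint_exists:
  assumes "is_transition T" "\<pi> \<in> policies" "0 \<le> \<gamma>" "\<gamma> < 1"
  shows "\<exists>V. \<forall>s. V s = bellman T R \<gamma> \<pi> V s"
  unfolding bellman_def
  by (rule discounted_fixpoint_exists[OF stochastic_policy_kernel[OF assms(1,2)] assms(3,4)])

lemma expected_reward_bellman_step:
  assumes V: "\<And>s. V s = bellman T R \<gamma> \<pi> V s"
  shows "(\<Sum>s\<in>UNIV. \<Sum>a\<in>UNIV. state_dist T d0 \<pi> t s * \<pi> s a * R s a)
    = (\<Sum>s\<in>UNIV. state_dist T d0 \<pi> t s * V s) - \<gamma> * (\<Sum>s\<in>UNIV. state_dist T d0 \<pi> (Suc t) s * V s)"
proof -
  let ?d = "state_dist T d0 \<pi> t"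
  have reward: "policy_reward R \<pi> s = V s - \<gamma> * (\<Sum>s'\<in>UNIV. policy_kernel T \<pi> s s' * V s')" for s
    using V[of s] unfolding bellman_def by linarith
  have "(\<Sum>s\<in>UNIV. \<Sum>a\<in>UNIV. ?d s * \<pi> s a * R s a) = (\<Sum>s\<in>UNIV. ?d s * policy_reward R \<pi> s)"
    by (simp add: policy_reward_def sum_distrib_left mult.assoc)
  also have "\<dots> = (\<Sum>s\<in>UNIV. ?d s * V s) - \<gamma> * (\<Sum>s\<in>UNIV. ?d s * (\<Sum>s'\<in>UNIV. policy_kernel T \<pi> s s' * V s'))"
    unfolding reward by (simp add: right_diff_distrib sum_subtractf sum_distrib_left mult.left_commute)
  also have "(\<Sum>s\<in>UNIV. ?d s * (\<Sum>s'\<in>UNIV. policy_kernel T \<pi> s s' * V s'))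
      = (\<Sum>s\<in>UNIV. state_dist T d0 \<pi> (Suc t) s * V s)"
    unfolding state_dist_Suc_kernel
    by (simp add: sum_distrib_left sum_distrib_right mult.assoc) (rule sum.swap)
  finally show ?thesis .
qed

lemma J_eq_bellman_fixpoint:
  assumes T: "is_transition T" and d0: "is_dist d0" and \<gamma>: "0 \<le> \<gamma>" "\<gamma> < 1"
    and \<pi>: "\<pi> \<in> policies" and V: "\<And>s. V s = bellman T R \<gamma> \<pi> V s"
  shows "J T d0 R \<gamma> \<pi> = (\<Sum>s\<in>UNIV. d0 s * V s)"
proof -
  define f where "f t = \<gamma>^t * (\<Sum>s\<in>UNIV. state_dist T d0 \<pi> t s * V s)" for t
  have telescope: "\<gamma>^t * (\<Sum>s\<in>UNIV. \<Sum>a\<in>UNIV. state_dist T d0 \<pi> t s * \<pi> s a * R s a)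
      = f t - f (Suc t)" for t
    unfolding expected_reward_bellman_step[OF V] by (simp add: f_def right_diff_distrib mult.assoc)
  define B where "B = (\<Sum>s\<in>UNIV. \<bar>V s\<bar>)"
  have "\<bar>\<Sum>s\<in>UNIV. state_dist T d0 \<pi> t s * V s\<bar> \<le> B" for t
    unfolding B_def by (intro abs_expectation_le is_dist_state_dist[OF T d0 \<pi>] member_le_sum) auto
  then have fB: "norm (f t) \<le> \<gamma>^t * B" for t
    using \<gamma> unfolding f_def real_norm_def abs_mult power_abs abs_of_nonneg[OF \<gamma>(1)]
    by (intro mult_left_mono) auto
  have "(\<lambda>t. \<gamma>^t * B) \<longlonglongrightarrow> 0"
    using \<gamma> by (intro tendsto_mult_left_zero LIMSEQ_power_zero) auto
  with fB have "f \<longlonglongrightarrow> 0"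
    by (intro Lim_null_comparison[of f "\<lambda>t. \<gamma>^t * B"]) auto
  then have "(\<lambda>t. f t - f (Suc t)) sums f 0"
    unfolding sums_def sum_lessThan_telescope' by (rule tendsto_diff[OF tendsto_const, of _ 0, simplified])
  then have "J T d0 R \<gamma> \<pi> = f 0"
    unfolding J_def telescope by (rule sums_unique[symmetric])
  then show ?thesis
    by (simp add: f_def)
qed

section \<open>The value along a one-state segment\<close>

definition interp :: "('s \<Rightarrow> 'a \<Rightarrow> real) \<Rightarrow> ('s \<Rightarrow> 'a \<Rightarrow> real) \<Rightarrow> real \<Rightarrow> 's \<Rightarrow> 'a \<Rightarrow> real"
  where "interp p q \<mu> = (\<lambda>s a. (1 - \<mu>) * p s a + \<mu> * q s a)"

definition agree_off :: "'s \<Rightarrow> ('s \<Rightarrow> 'b) \<Rightarrow> ('s \<Rightarrow> 'b) \<Rightarrow> bool"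
  where "agree_off s0 p q \<longleftrightarrow> (\<forall>s. s \<noteq> s0 \<longrightarrow> p s = q s)"

lemma interp_0 [simp]: "interp p q 0 = p"
  and interp_1 [simp]: "interp p q 1 = q"
  by (simp_all add: interp_def)

lemma interp_in_policies:
  assumes "p \<in> policies" "q \<in> policies" "\<mu> \<in> {0..1}"
  shows "interp p q \<mu> \<in> policies"
proof -
  have "(\<Sum>a\<in>UNIV. interp p q \<mu> s a) = (1 - \<mu>) * (\<Sum>a\<in>UNIV. p s a) + \<mu> * (\<Sum>a\<in>UNIV. q s a)" for s
    by (simp add: interp_def sum.distrib sum_distrib_left)
  then show ?thesis
    using assms by (auto simp: policies_def is_dist_def interp_def)
qed

lemma policy_reward_interp:
  "policy_reward R (interp p q \<mu>) s = (1 - \<mu>) * policy_reward R p s + \<mu> * policy_reward R q s"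
  by (simp add: policy_reward_def interp_def algebra_simps sum.distrib sum_distrib_left sum_subtractf)

lemma bellman_interp_agree_off:
  assumes "agree_off s0 p q"
  shows "bellman T R \<gamma> (interp p q \<mu>) V s
    = bellman T R \<gamma> p V s + (if s = s0 then \<mu> * (bellman T R \<gamma> q V s - bellman T R \<gamma> p V s) else 0)"
proof -
  have kernel: "policy_kernel T \<pi> s s' = policy_reward (\<lambda>s a. T s a s') \<pi> s" for \<pi> s'
    by (simp add: policy_kernel_def policy_reward_def)
  have mix: "(\<Sum>s'\<in>UNIV. ((1 - \<mu>) * x s' + \<mu> * y s') * V s')
      = (1 - \<mu>) * (\<Sum>s'\<in>UNIV. x s' * V s') + \<mu> * (\<Sum>s'\<in>UNIV. y s' * V s')" for x y
    by (simp add: distrib_right sum.distrib sum_distrib_left mult.assoc)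
  have "bellman T R \<gamma> (interp p q \<mu>) V s = (1 - \<mu>) * bellman T R \<gamma> p V s + \<mu> * bellman T R \<gamma> q V s"
    unfolding bellman_def kernel policy_reward_interp mix by (simp add: algebra_simps)
  moreover have "bellman T R \<gamma> q V s = bellman T R \<gamma> p V s" if "s \<noteq> s0"
    using assms that by (simp add: agree_off_def bellman_def policy_reward_def policy_kernel_def)
  ultimately show ?thesis
    by (auto simp: algebra_simps)
qed

lemma bellman_zero_reward [simp]:
  "bellman T (\<lambda>_ _. 0) \<gamma> \<pi> V s = \<gamma> * (\<Sum>s'\<in>UNIV. policy_kernel T \<pi> s s' * V s')"
  by (simp add: bellman_def policy_reward_def)

lemma bellman_add:
  "bellman T R \<gamma> \<pi> (\<lambda>s. V s + \<kappa> * H s) s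
    = bellman T R \<gamma> \<pi> V s + \<kappa> * bellman T (\<lambda>_ _. 0) \<gamma> \<pi> H s"
  by (simp add: bellman_def algebra_simps sum.distrib sum_distrib_left)

text \<open>The fixpoint for the interpolated policy is a rank-one correction of the one for \<open>p\<close>, along
  the discounted occupancy \<open>H\<close> of \<open>s0\<close> (a Sherman-Morrison update).\<close>
lemma bellman_fixpoint_interp:
  assumes pq: "agree_off s0 p q"
    and V0: "\<And>s. V0 s = bellman T R \<gamma> p V0 s"
    and H: "\<And>s. H s = (if s = s0 then 1 else 0) + bellman T (\<lambda>_ _. 0) \<gamma> p H s"
    and \<kappa>: "\<kappa> = \<mu> * (bellman T R \<gamma> q V0 s0 - bellman T R \<gamma> p V0 s0)
      + \<kappa> * \<mu> * (bellman T (\<lambda>_ _. 0) \<gamma> q H s0 - bellman T (\<lambda>_ _. 0) \<gamma> p H s0)"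
  shows "V0 s + \<kappa> * H s = bellman T R \<gamma> (interp p q \<mu>) (\<lambda>s. V0 s + \<kappa> * H s) s"
proof (cases "s = s0")
  case True
  have "bellman T R \<gamma> (interp p q \<mu>) (\<lambda>s. V0 s + \<kappa> * H s) s0
      = bellman T R \<gamma> p V0 s0 + \<kappa> * bellman T (\<lambda>_ _. 0) \<gamma> p H s0
        + (\<mu> * (bellman T R \<gamma> q V0 s0 - bellman T R \<gamma> p V0 s0)
          + \<kappa> * \<mu> * (bellman T (\<lambda>_ _. 0) \<gamma> q H s0 - bellman T (\<lambda>_ _. 0) \<gamma> p H s0))"
    unfolding bellman_interp_agree_off[OF pq] bellman_add by (simp add: algebra_simps)
  also have "\<dots> = V0 s0 + \<kappa> * (H s0 - 1) + \<kappa>"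
    unfolding \<kappa>[symmetric] using V0[of s0] H[of s0] by simp
  finally show ?thesis
    using True by (simp add: algebra_simps)
next
  case False
  then show ?thesis
    unfolding bellman_interp_agree_off[OF pq] bellman_add using V0[of s] H[of s] by simp
qed

lemma occupancy_denominator_pos:
  assumes T: "is_transition T" and \<gamma>: "0 \<le> \<gamma>" "\<gamma> < 1"
    and p: "p \<in> policies" and q: "q \<in> policies" and pq: "agree_off s0 p q"
    and H: "\<And>s. H s = (if s = s0 then 1 else 0) + bellman T (\<lambda>_ _. 0) \<gamma> p H s"
    and \<mu>: "\<mu> \<in> {0..1}"
  shows "0 < 1 - \<mu> * (bellman T (\<lambda>_ _. 0) \<gamma> q H s0 - bellman T (\<lambda>_ _. 0) \<gamma> p H s0)"
proof -
  define b where "b = bellman T (\<lambda>_ _. 0) \<gamma> q H s0 - bellman T (\<lambda>_ _. 0) \<gamma> p H s0"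
  \<comment> \<open>a vanishing denominator would make \<open>H \<noteq> 0\<close> a solution of the homogeneous equation\<close>
  have nz: "\<mu> * b \<noteq> 1" if \<mu>: "\<mu> \<in> {0..1}" for \<mu>
  proof
    assume "\<mu> * b = 1"
    then have "H s = bellman T (\<lambda>_ _. 0) \<gamma> (interp p q \<mu>) H s" for s
      using H[of s] unfolding bellman_interp_agree_off[OF pq] b_def
      by (cases "s = s0") simp_all
    then have "H = (\<lambda>_. 0)"
      unfolding bellman_zero_reward
      by (rule discounted_fixpoint_eq_zero[OF stochastic_policy_kernel[OF T interp_in_policies[OF p q \<mu>]] \<gamma>])
    then show False
      using H[of s0] by simp
  qed
  show ?thesis
  proof (rule ccontr)
    assume "\<not> ?thesis"
    then have "1 \<le> b"
      using \<mu> by (smt (verit) atLeastAtMost_iff b_def mult_left_le_one_le mult_nonneg_nonpos)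
    then have "1 / b \<in> {0..1}" "1 / b * b = 1"
      by auto
    then show False
      using nz by blast
  qed
qed

definition linear_fractional_01 :: "(real \<Rightarrow> real) \<Rightarrow> bool"
  where "linear_fractional_01 h \<longleftrightarrow>
    (\<exists>\<alpha> \<beta> b. \<forall>\<mu>\<in>{0..1}. 0 < 1 + b * \<mu> \<and> h \<mu> = (\<alpha> + \<beta> * \<mu>) / (1 + b * \<mu>))"

lemma linear_fractional_J_interp:
  assumes T: "is_transition T" and d0: "is_dist d0" and \<gamma>: "0 \<le> \<gamma>" "\<gamma> < 1"
    and p: "p \<in> policies" and q: "q \<in> policies" and pq: "agree_off s0 p q"
  shows "linear_fractional_01 (\<lambda>\<mu>. J T d0 R \<gamma> (interp p q \<mu>))"
proof -
  obtain V0 where V0: "\<And>s. V0 s = bellman T R \<gamma> p V0 s"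
    using bellman_fixpoint_exists[OF T p \<gamma>] by blast
  obtain H where H: "\<And>s. H s = (if s = s0 then 1 else 0) + bellman T (\<lambda>_ _. 0) \<gamma> p H s"
    unfolding bellman_zero_reward
    using discounted_fixpoint_exists[OF stochastic_policy_kernel[OF T p] \<gamma>, of "\<lambda>s. if s = s0 then 1 else 0"]
    by blast
  define a where "a = bellman T R \<gamma> q V0 s0 - bellman T R \<gamma> p V0 s0"
  define b where "b = bellman T (\<lambda>_ _. 0) \<gamma> q H s0 - bellman T (\<lambda>_ _. 0) \<gamma> p H s0"
  define c0 where "c0 = (\<Sum>s\<in>UNIV. d0 s * V0 s)"
  define c1 where "c1 = (\<Sum>s\<in>UNIV. d0 s * H s)"
  have pos: "0 < 1 + (- b) * \<mu>" if "\<mu> \<in> {0..1}" for \<mu>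
    using occupancy_denominator_pos[OF T \<gamma> p q pq H that] unfolding b_def[symmetric] by (simp add: algebra_simps)
  have "J T d0 R \<gamma> (interp p q \<mu>) = (c0 + (a * c1 - c0 * b) * \<mu>) / (1 + (- b) * \<mu>)"
    if \<mu>: "\<mu> \<in> {0..1}" for \<mu>
  proof -
    define \<kappa> where "\<kappa> = \<mu> * a / (1 - \<mu> * b)"
    have "\<kappa> = \<mu> * a + \<kappa> * \<mu> * b"
      using pos[OF \<mu>] by (simp add: \<kappa>_def field_simps)
    then have "V0 s + \<kappa> * H s = bellman T R \<gamma> (interp p q \<mu>) (\<lambda>s. V0 s + \<kappa> * H s) s" for s
      unfolding a_def b_def by (rule bellman_fixpoint_interp[OF pq V0 H])
    then have "J T d0 R \<gamma> (interp p q \<mu>) = (\<Sum>s\<in>UNIV. d0 s * (V0 s + \<kappa> * H s))"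
      by (rule J_eq_bellman_fixpoint[OF T d0 \<gamma> interp_in_policies[OF p q \<mu>]])
    also have "\<dots> = c0 + \<kappa> * c1"
      by (simp add: c0_def c1_def distrib_left sum.distrib sum_distrib_left mult.left_commute)
    also have "\<dots> = (c0 + (a * c1 - c0 * b) * \<mu>) / (1 + (- b) * \<mu>)"
      using pos[OF \<mu>] by (simp add: \<kappa>_def field_simps)
    finally show ?thesis .
  qed
  with pos show ?thesis
    unfolding linear_fractional_01_def by blast
qed

section \<open>Neighbourhoods of policies and continuity of the value\<close>

definition sup_ball :: "('s \<Rightarrow> 'a \<Rightarrow> real) \<Rightarrow> real \<Rightarrow> ('s \<Rightarrow> 'a \<Rightarrow> real) set"
  where "sup_ball w \<epsilon> = {\<pi>. \<forall>s a. \<bar>\<pi> s a - w s a\<bar> < \<epsilon>}"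

lemma sup_ball_mono: "\<pi> \<in> sup_ball w \<delta> \<Longrightarrow> \<delta> \<le> \<epsilon> \<Longrightarrow> \<pi> \<in> sup_ball w \<epsilon>"
  by (auto simp: sup_ball_def intro: less_le_trans)

lemma sup_ball_triangle: "\<pi> \<in> sup_ball w r \<Longrightarrow> w \<in> sup_ball u r' \<Longrightarrow> \<pi> \<in> sup_ball u (r + r')"
  unfolding sup_ball_def by (smt (verit) mem_Collect_eq)

lemma interp_in_sup_ball:
  assumes "x \<in> sup_ball u r" "y \<in> sup_ball u r" "\<mu> \<in> {0..1}"
  shows "interp x y \<mu> \<in> sup_ball u r"
proof -
  have "\<bar>interp x y \<mu> s a - u s a\<bar> \<le> (1 - \<mu>) * \<bar>x s a - u s a\<bar> + \<mu> * \<bar>y s a - u s a\<bar>" for s a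
  proof -
    have "interp x y \<mu> s a - u s a = (1 - \<mu>) * (x s a - u s a) + \<mu> * (y s a - u s a)"
      by (simp add: interp_def algebra_simps)
    then show ?thesis
      using assms(3) abs_triangle_ineq[of "(1 - \<mu>) * (x s a - u s a)" "\<mu> * (y s a - u s a)"]
      by (simp add: abs_mult)
  qed
  also have "(1 - \<mu>) * \<bar>x s a - u s a\<bar> + \<mu> * \<bar>y s a - u s a\<bar> < r" for s a
    using assms by (intro convex_bound_lt) (auto simp: sup_ball_def)
  finally show ?thesis
    by (simp add: sup_ball_def)
qed

text \<open>Policies are identified with vectors in \<open>real^('s \<times> 'a)\<close>, where the \<open>\<ell>\<^sub>1\<close>-norm bounds the
  Euclidean one.\<close>
lemma open_contains_sup_ball:
  fixes T :: "('s::finite \<Rightarrow> 'a::finite \<Rightarrow> real) set"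
  assumes "open T" "w \<in> T"
  shows "\<exists>\<epsilon>>0. sup_ball w \<epsilon> \<subseteq> T"
proof -
  define \<Phi> :: "real^('s \<times> 'a) \<Rightarrow> 's \<Rightarrow> 'a \<Rightarrow> real" where "\<Phi> v = (\<lambda>s a. v $ (s, a))" for v
  define \<omega> :: "real^('s \<times> 'a)" where "\<omega> = (\<chi> i. w (fst i) (snd i))"
  have "continuous_on UNIV \<Phi>"
    unfolding \<Phi>_def by (intro continuous_on_coordinatewise_then_product continuous_on_component continuous_on_id)
  then have "open (\<Phi> -` T)"
    using assms(1) by (rule open_vimage[rotated])
  moreover have "\<omega> \<in> \<Phi> -` T"
    using assms(2) by (simp add: \<Phi>_def \<omega>_def)
  ultimately obtain e where e: "e > 0" "ball \<omega> e \<subseteq> \<Phi> -` T"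
    by (meson open_contains_ball)
  define \<epsilon> where "\<epsilon> = e / CARD('s \<times> 'a)"
  have "\<pi> \<in> T" if \<pi>: "\<pi> \<in> sup_ball w \<epsilon>" for \<pi>
  proof -
    define v :: "real^('s \<times> 'a)" where "v = (\<chi> i. \<pi> (fst i) (snd i))"
    have "dist v \<omega> \<le> (\<Sum>i\<in>UNIV. \<bar>(v - \<omega>) $ i\<bar>)"
      unfolding dist_norm by (rule norm_le_l1_cart)
    also have "\<dots> < (\<Sum>i\<in>(UNIV :: ('s \<times> 'a) set). \<epsilon>)"
      using \<pi> by (intro sum_strict_mono) (auto simp: v_def \<omega>_def sup_ball_def)
    also have "\<dots> = e"
      by (simp add: \<epsilon>_def)
    finally have "\<Phi> v \<in> T"
      using e(2) by (auto simp: dist_commute)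
    then show ?thesis
      by (simp add: \<Phi>_def v_def)
  qed
  moreover have "\<epsilon> > 0"
    using e(1) by (simp add: \<epsilon>_def)
  ultimately show ?thesis
    by blast
qed

lemma continuous_on_sup_ball:
  fixes F :: "('s::finite \<Rightarrow> 'a::finite \<Rightarrow> real) \<Rightarrow> real"
  assumes F: "continuous_on policies F" and w: "w \<in> policies" and e: "e > 0"
  shows "\<exists>\<epsilon>>0. \<forall>\<pi>\<in>policies \<inter> sup_ball w \<epsilon>. \<bar>F \<pi> - F w\<bar> < e"
proof -
  obtain A where A: "open A" "A \<inter> policies = F -` ball (F w) e \<inter> policies"
    using F unfolding continuous_on_open_invariant by (meson open_ball)
  then have "w \<in> A"
    using w e by auto
  then obtain \<epsilon> where "\<epsilon> > 0" "sup_ball w \<epsilon> \<subseteq> A"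
    using open_contains_sup_ball[OF A(1)] by blast
  moreover have "\<bar>F \<pi> - F w\<bar> < e" if "\<pi> \<in> policies \<inter> A" for \<pi>
  proof -
    have "F \<pi> \<in> ball (F w) e"
      using A(2) that by blast
    then show ?thesis
      by (simp add: dist_real_def abs_minus_commute)
  qed
  ultimately show ?thesis
    by blast
qed

lemma openin_policies_pos_sup_ball:
  fixes U :: "('s::finite \<Rightarrow> 'a::finite \<Rightarrow> real) set"
  assumes "openin (top_of_set policies_pos) U" "u \<in> U"
  shows "\<exists>\<epsilon>>0. policies \<inter> sup_ball u \<epsilon> \<subseteq> U"
proof -
  obtain T where T: "open T" "U = policies_pos \<inter> T"
    using assms(1) unfolding openin_open by blast
  then obtain \<epsilon> where \<epsilon>: "0 < \<epsilon>" "sup_ball u \<epsilon> \<subseteq> T"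
    using open_contains_sup_ball assms(2) by blast
  define m where "m = Min (range (case_prod u))"
  have "m \<in> range (case_prod u)"
    unfolding m_def by (rule Min_in) auto
  then have m: "0 < m"
    using assms(2) T(2) by (auto simp: policies_pos_def)
  have m_le: "m \<le> u s a" for s a
    unfolding m_def by (rule Min_le) auto
  have "\<pi> \<in> U" if \<pi>: "\<pi> \<in> policies" "\<pi> \<in> sup_ball u (min \<epsilon> m)" for \<pi>
  proof -
    have "0 < \<pi> s a" for s a
    proof -
      have "\<bar>\<pi> s a - u s a\<bar> < m"
        using \<pi>(2) by (simp add: sup_ball_def)
      with m_le[of s a] show ?thesis
        by linarith
    qed
    moreover have "\<pi> \<in> T"
      using \<pi>(2) \<epsilon>(2) sup_ball_mono[of \<pi> u "min \<epsilon> m" \<epsilon>] by auto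
    ultimately show ?thesis
      using \<pi>(1) T(2) by (simp add: policies_pos_def)
  qed
  with \<epsilon>(1) m show ?thesis
    by (intro exI[of _ "min \<epsilon> m"]) auto
qed

lemma continuous_on_policy_entry: "continuous_on UNIV (\<lambda>\<pi>::'s \<Rightarrow> 'a \<Rightarrow> real. \<pi> s a)"
  by (rule continuous_on_product_then_coordinatewise[OF continuous_on_product_coordinates])

lemma continuous_on_state_dist: "continuous_on UNIV (\<lambda>\<pi>. state_dist T d0 \<pi> t s)"
proof (induction t arbitrary: s)
  case 0
  then show ?case by simp
next
  case (Suc t)
  show ?case
    by (simp only: state_dist.simps) (intro continuous_intros Suc continuous_on_policy_entry)
qed

lemma continuous_on_J:
  assumes T: "is_transition T" and d0: "is_dist d0" and \<gamma>: "0 \<le> \<gamma>" "\<gamma> < 1"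
  shows "continuous_on policies (J T d0 R \<gamma>)"
proof -
  define f where "f t \<pi> = \<gamma>^t * (\<Sum>s\<in>UNIV. \<Sum>a\<in>UNIV. state_dist T d0 \<pi> t s * \<pi> s a * R s a)" for t \<pi>
  define c where "c = (\<Sum>s\<in>UNIV. \<Sum>a\<in>UNIV. \<bar>R s a\<bar>)"
  have R_le: "\<bar>R s a\<bar> \<le> c" for s a
  proof -
    have "\<bar>R s a\<bar> \<le> (\<Sum>a\<in>UNIV. \<bar>R s a\<bar>)"
      by (rule member_le_sum) auto
    also have "\<dots> \<le> c"
      unfolding c_def by (rule member_le_sum) (auto intro: sum_nonneg)
    finally show ?thesis .
  qed
  have "norm (f t \<pi>) \<le> \<gamma>^t * c" if \<pi>: "\<pi> \<in> policies" for t \<pi>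
  proof -
    have "(\<Sum>s\<in>UNIV. \<Sum>a\<in>UNIV. state_dist T d0 \<pi> t s * \<pi> s a * R s a)
        = (\<Sum>s\<in>UNIV. state_dist T d0 \<pi> t s * (\<Sum>a\<in>UNIV. \<pi> s a * R s a))"
      by (simp add: sum_distrib_left mult.assoc)
    also have "\<bar>\<dots>\<bar> \<le> c"
      using \<pi> R_le
      by (intro abs_expectation_le is_dist_state_dist[OF T d0 \<pi>]) (auto intro: policy_is_dist)
    finally show ?thesis
      using \<gamma> unfolding f_def real_norm_def abs_mult power_abs abs_of_nonneg[OF \<gamma>(1)]
      by (intro mult_left_mono) auto
  qed
  moreover have "summable (\<lambda>t. \<gamma>^t * c)"
    using \<gamma> by (intro summable_mult2 summable_geometric) auto
  ultimately have "uniform_limit policies (\<lambda>n \<pi>. \<Sum>t<n. f t \<pi>) (\<lambda>\<pi>. \<Sum>t. f t \<pi>) sequentially"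
    by (rule Weierstrass_m_test)
  moreover have "continuous_on policies (\<lambda>\<pi>. \<Sum>t<n. f t \<pi>)" for n
    unfolding f_def
    by (rule continuous_on_subset[OF _ subset_UNIV])
       (intro continuous_intros continuous_on_state_dist continuous_on_policy_entry)
  ultimately have "continuous_on policies (\<lambda>\<pi>. \<Sum>t. f t \<pi>)"
    by (intro uniform_limit_theorem[where F = sequentially] always_eventually) auto
  then show ?thesis
    by (simp add: J_def f_def)
qed

lemma connected_policies: "connected (policies :: ('s::finite \<Rightarrow> 'a::finite \<Rightarrow> real) set)"
proof -
  have "path (interp p q)" "path_image (interp p q) \<subseteq> policies"
    if "p \<in> policies" "q \<in> policies" for p q :: "'s \<Rightarrow> 'a \<Rightarrow> real"
  proof -
    have "continuous_on {0..1} (\<lambda>\<mu>. interp p q \<mu> s a)" for s a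
      unfolding interp_def by (intro continuous_on_add continuous_on_mult continuous_on_diff
          continuous_on_const continuous_on_id)
    then show "path (interp p q)"
      unfolding path_def by (intro continuous_on_coordinatewise_then_product)
    show "path_image (interp p q) \<subseteq> policies"
      using that by (auto simp: path_image_def intro: interp_in_policies)
  qed
  then have "path_connected (policies :: ('s \<Rightarrow> 'a \<Rightarrow> real) set)"
    unfolding path_connected_def by (metis interp_0 interp_1 pathfinish_def pathstart_def)
  then show ?thesis
    by (rule path_connected_imp_connected)
qed

section \<open>Regular objectives\<close>

definition regular_objective :: "(('s::finite \<Rightarrow> 'a::finite \<Rightarrow> real) \<Rightarrow> real) \<Rightarrow> bool"
  where "regular_objective F \<longleftrightarrow> continuous_on policies F \<and>
    (\<forall>p\<in>policies. \<forall>q\<in>policies. \<forall>s0. agree_off s0 p q \<longrightarrow> linear_fractional_01 (\<lambda>\<mu>. F (interp p q \<mu>)))"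

lemma regular_objective_J:
  assumes "is_transition T" "is_dist d0" "0 \<le> \<gamma>" "\<gamma> < 1"
  shows "regular_objective (J T d0 R \<gamma>)"
  using assms continuous_on_J linear_fractional_J_interp by (auto simp: regular_objective_def)

lemma linear_fractional_01_sgn_diff:
  fixes h :: "real \<Rightarrow> real"
  assumes h: "\<forall>\<mu>\<in>{0..1}. 0 < 1 + b * \<mu> \<and> h \<mu> = (\<alpha> + \<beta> * \<mu>) / (1 + b * \<mu>)"
    and xy: "x \<in> {0..1}" "y \<in> {0..1}" "x < y"
  shows "sgn (h y - h x) = sgn (\<beta> - \<alpha> * b)"
proof -
  have dx: "0 < 1 + b * x" and dy: "0 < 1 + b * y"
    using h xy by auto
  then have "h y - h x = (\<beta> - \<alpha> * b) * ((y - x) / ((1 + b * x) * (1 + b * y)))"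
    using h xy by (simp add: field_simps)
  moreover have "0 < (y - x) / ((1 + b * x) * (1 + b * y))"
    using dx dy xy by simp
  ultimately show ?thesis
    by (simp only: sgn_mult sgn_pos mult_1_right)
qed

lemma continuous_on_linear_fractional_01:
  assumes "linear_fractional_01 h"
  shows "continuous_on {0..1} h"
proof -
  obtain \<alpha> \<beta> b where h: "\<forall>\<mu>\<in>{0..1}. 0 < 1 + b * \<mu> \<and> h \<mu> = (\<alpha> + \<beta> * \<mu>) / (1 + b * \<mu>)"
    using assms unfolding linear_fractional_01_def by blast
  have "continuous_on {0..1} (\<lambda>\<mu>::real. (\<alpha> + \<beta> * \<mu>) / (1 + b * \<mu>))"
    using h by (intro continuous_intros) auto
  then show ?thesis
    by (rule continuous_on_eq) (use h in auto)
qed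

text \<open>Eliminating \<open>\<mu>\<close> between two linear fractional expressions.\<close>
lemma linear_fractional_moebius_relation:
  fixes x y :: real
  assumes "1 + b1 * \<mu> \<noteq> 0" "x = (a1 + c1 * \<mu>) / (1 + b1 * \<mu>)"
    and "1 + b2 * \<mu> \<noteq> 0" "y = (a2 + c2 * \<mu>) / (1 + b2 * \<mu>)"
  shows "x * ((b1 - b2) * y + (c2 - b1 * a2)) = (c1 - a1 * b2) * y + (a1 * c2 - c1 * a2)"
  using assms by (simp add: field_simps) algebra

lemma moebius_relation_on_curve:
  fixes F1 F2 :: "'p \<Rightarrow> real"
  assumes f: "\<forall>\<mu>\<in>{0..1}. 0 < 1 + b1 * \<mu> \<and> f \<mu> = (a1 + c1 * \<mu>) / (1 + b1 * \<mu>)"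
    and g: "\<forall>\<mu>\<in>{0..1}. 0 < 1 + b2 * \<mu> \<and> g \<mu> = (a2 + c2 * \<mu>) / (1 + b2 * \<mu>)"
    and curve: "\<forall>\<pi>\<in>N. \<exists>\<mu>\<in>{0..1}. F1 \<pi> = f \<mu> \<and> F2 \<pi> = g \<mu>"
  shows "\<exists>a b c d. a * d - b * c = (c1 - a1 * b1) * (c2 - a2 * b2)
    \<and> (\<forall>\<pi>\<in>N. F1 \<pi> * (c * F2 \<pi> + d) = a * F2 \<pi> + b)"
proof (intro exI conjI ballI)
  show "(c1 - a1 * b2) * (c2 - b1 * a2) - (a1 * c2 - c1 * a2) * (b1 - b2) = (c1 - a1 * b1) * (c2 - a2 * b2)"
    by (simp add: algebra_simps)
  fix \<pi> assume "\<pi> \<in> N"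
  then obtain \<mu> where \<mu>: "\<mu> \<in> {0..1}" "F1 \<pi> = f \<mu>" "F2 \<pi> = g \<mu>"
    using curve by blast
  show "F1 \<pi> * ((b1 - b2) * F2 \<pi> + (c2 - b1 * a2)) = (c1 - a1 * b2) * F2 \<pi> + (a1 * c2 - c1 * a2)"
    unfolding \<mu>(2,3) using bspec[OF f \<mu>(1)] bspec[OF g \<mu>(1)]
    by (intro linear_fractional_moebius_relation) auto
qed

definition rigid :: "(('s::finite \<Rightarrow> 'a::finite \<Rightarrow> real) \<Rightarrow> bool) \<Rightarrow> bool"
  where "rigid Z \<longleftrightarrow> (\<forall>p\<in>policies. \<forall>q\<in>policies. \<forall>s0 \<eta>. agree_off s0 p q \<longrightarrow> 0 < \<eta> \<longrightarrow>
    (\<forall>\<mu>\<in>{0<..<\<eta>}. Z (interp p q \<mu>)) \<longrightarrow> Z q)"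

lemma poly_moebius_relation_clear_denominators:
  fixes a b c d a1 c1 b1 a2 c2 b2 \<mu> x y :: real
  assumes "x = (a1 + c1 * \<mu>) / (1 + b1 * \<mu>)" "1 + b1 * \<mu> \<noteq> 0"
    and "y = (a2 + c2 * \<mu>) / (1 + b2 * \<mu>)" "1 + b2 * \<mu> \<noteq> 0"
  shows "poly (smult c ([:a1, c1:] * [:a2, c2:]) + smult d ([:a1, c1:] * [:1, b2:])
      - smult a ([:a2, c2:] * [:1, b1:]) - smult b ([:1, b1:] * [:1, b2:])) \<mu>
    = (x * (c * y + d) - (a * y + b)) * ((1 + b1 * \<mu>) * (1 + b2 * \<mu>))"
proof -
  have x: "a1 + c1 * \<mu> = x * (1 + b1 * \<mu>)" and y: "a2 + c2 * \<mu> = y * (1 + b2 * \<mu>)"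
    using assms by simp_all
  have "poly (smult c ([:a1, c1:] * [:a2, c2:]) + smult d ([:a1, c1:] * [:1, b2:])
      - smult a ([:a2, c2:] * [:1, b1:]) - smult b ([:1, b1:] * [:1, b2:])) \<mu>
    = c * (a1 + c1 * \<mu>) * (a2 + c2 * \<mu>) + d * (a1 + c1 * \<mu>) * (1 + b2 * \<mu>)
      - a * (a2 + c2 * \<mu>) * (1 + b1 * \<mu>) - b * (1 + b1 * \<mu>) * (1 + b2 * \<mu>)"
    by (simp add: algebra_simps)
  also have "\<dots> = (x * (c * y + d) - (a * y + b)) * ((1 + b1 * \<mu>) * (1 + b2 * \<mu>))"
    unfolding x y by (simp add: algebra_simps)
  finally show ?thesis .
qed

text \<open>Along a segment, the relation becomes the vanishing of a quadratic polynomial in \<open>\<mu>\<close>,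
  which cannot vanish on an interval unless it is zero.\<close>
lemma rigid_moebius_relation:
  assumes F1: "regular_objective F1" and F2: "regular_objective F2"
  shows "rigid (\<lambda>\<pi>. F1 \<pi> * (c * F2 \<pi> + d) = a * F2 \<pi> + b)"
  unfolding rigid_def
proof (intro ballI allI impI)
  fix p q s0 and \<eta> :: real
  assume p: "p \<in> policies" and q: "q \<in> policies" and pq: "agree_off s0 p q" and \<eta>: "0 < \<eta>"
    and near: "\<forall>\<mu>\<in>{0<..<\<eta>}. F1 (interp p q \<mu>) * (c * F2 (interp p q \<mu>) + d) = a * F2 (interp p q \<mu>) + b"
  obtain a1 c1 b1 where h1: "\<forall>\<mu>\<in>{0..1}. 0 < 1 + b1 * \<mu> \<and> F1 (interp p q \<mu>) = (a1 + c1 * \<mu>) / (1 + b1 * \<mu>)"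
    using F1 p q pq unfolding regular_objective_def linear_fractional_01_def by blast
  obtain a2 c2 b2 where h2: "\<forall>\<mu>\<in>{0..1}. 0 < 1 + b2 * \<mu> \<and> F2 (interp p q \<mu>) = (a2 + c2 * \<mu>) / (1 + b2 * \<mu>)"
    using F2 p q pq unfolding regular_objective_def linear_fractional_01_def by blast
  define Q where "Q = smult c ([:a1, c1:] * [:a2, c2:]) + smult d ([:a1, c1:] * [:1, b2:])
    - smult a ([:a2, c2:] * [:1, b1:]) - smult b ([:1, b1:] * [:1, b2:])"
  have Q: "poly Q \<mu> = (F1 (interp p q \<mu>) * (c * F2 (interp p q \<mu>) + d) - (a * F2 (interp p q \<mu>) + b))
      * ((1 + b1 * \<mu>) * (1 + b2 * \<mu>))" if "\<mu> \<in> {0..1}" for \<mu>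
    using that h1 h2 unfolding Q_def by (intro poly_moebius_relation_clear_denominators) force+
  have "{0<..<min \<eta> 1} \<subseteq> {\<mu>. poly Q \<mu> = 0}"
    using near Q by force
  then have "Q = 0"
    using finite_subset[OF _ poly_roots_finite] \<eta> by (metis infinite_Ioo less_numeral_extra(1) min_def)
  moreover have "0 < 1 + b1" "0 < 1 + b2"
    using bspec[OF h1, of 1] bspec[OF h2, of 1] by auto
  ultimately show "F1 q * (c * F2 q + d) = a * F2 q + b"
    using Q[of 1] by simp
qed

lemma abs_policy_diff_le_one:
  assumes "\<pi> \<in> policies" "w \<in> policies"
  shows "\<bar>\<pi> s a - w s a\<bar> \<le> 1"
proof -
  have "0 \<le> \<pi> s a" "\<pi> s a \<le> 1" "0 \<le> w s a" "w s a \<le> 1"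
    using assms policy_is_dist is_dist_nonneg is_dist_le_one by blast+
  then show ?thesis
    by linarith
qed

text \<open>Induction on the set of states where \<open>\<pi>\<close> may be far from \<open>w\<close>: to add a state \<open>s0\<close>,
  move from \<open>\<pi>(s0 := w s0)\<close> towards \<open>\<pi>\<close> along a one-state segment.\<close>
lemma rigid_propagates:
  assumes Z: "rigid Z" and w: "w \<in> policies" and \<epsilon>: "0 < \<epsilon>"
    and near: "\<forall>\<pi>\<in>policies \<inter> sup_ball w \<epsilon>. Z \<pi>"
  shows "\<forall>\<pi>\<in>policies. Z \<pi>"
proof -
  have "\<forall>\<pi>\<in>policies. (\<forall>s. s \<notin> S \<longrightarrow> (\<forall>a. \<bar>\<pi> s a - w s a\<bar> < \<epsilon>)) \<longrightarrow> Z \<pi>" if "finite S" for S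
    using that
  proof (induction S rule: finite_induct)
    case empty
    then show ?case
      using near by (auto simp: sup_ball_def)
  next
    case (insert s0 S)
    show ?case
    proof (intro ballI impI)
      fix \<pi> assume \<pi>: "\<pi> \<in> policies" and close: "\<forall>s. s \<notin> insert s0 S \<longrightarrow> (\<forall>a. \<bar>\<pi> s a - w s a\<bar> < \<epsilon>)"
      define \<pi>' where "\<pi>' = \<pi>(s0 := w s0)"
      have \<pi>': "\<pi>' \<in> policies" and \<pi>'\<pi>: "agree_off s0 \<pi>' \<pi>"
        using \<pi> w by (auto simp: \<pi>'_def policies_def agree_off_def)
      have "Z (interp \<pi>' \<pi> \<mu>)" if \<mu>: "\<mu> \<in> {0<..<min \<epsilon> 1}" for \<mu>
      proof -
        have "\<bar>interp \<pi>' \<pi> \<mu> s a - w s a\<bar> < \<epsilon>" if "s \<notin> S" for s a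
        proof (cases "s = s0")
          case True
          then have "interp \<pi>' \<pi> \<mu> s a - w s a = \<mu> * (\<pi> s a - w s a)"
            by (simp add: interp_def \<pi>'_def algebra_simps)
          then have "\<bar>interp \<pi>' \<pi> \<mu> s a - w s a\<bar> = \<mu> * \<bar>\<pi> s a - w s a\<bar>"
            using \<mu> by (simp add: abs_mult)
          also have "\<dots> \<le> \<mu>"
            using \<mu> abs_policy_diff_le_one[OF \<pi> w] by (simp add: mult_left_le)
          finally show ?thesis
            using \<mu> by simp
        next
          case False
          then show ?thesis
            using close that by (simp add: interp_def \<pi>'_def algebra_simps)
        qed
        then show ?thesis
          using insert.IH interp_in_policies[OF \<pi>' \<pi>] \<mu> by auto
      qed
      then show "Z \<pi>"
        using Z \<pi>' \<pi> \<pi>'\<pi> \<epsilon> unfolding rigid_def by (meson min_less_iff_conj zero_less_one)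
    qed
  qed
  from this[of UNIV] show ?thesis
    by simp
qed

lemma moebius_relation_propagates:
  assumes "regular_objective F1" "regular_objective F2" "w \<in> policies" "0 < \<epsilon>"
    and "\<forall>\<pi>\<in>policies \<inter> sup_ball w \<epsilon>. F1 \<pi> * (c * F2 \<pi> + d) = a * F2 \<pi> + b"
  shows "\<forall>\<pi>\<in>policies. F1 \<pi> * (c * F2 \<pi> + d) = a * F2 \<pi> + b"
  using rigid_propagates[OF rigid_moebius_relation[OF assms(1,2)] assms(3-5)] .

lemma eq_by_one_state_steps:
  fixes S :: "('s::finite \<Rightarrow> 'b) set"
  assumes closed: "\<And>x y A. x \<in> S \<Longrightarrow> y \<in> S \<Longrightarrow> (\<lambda>s. if s \<in> A then y s else x s) \<in> S"
    and step: "\<And>x y s. x \<in> S \<Longrightarrow> y \<in> S \<Longrightarrow> agree_off s x y \<Longrightarrow> \<phi> x = \<phi> y"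
    and x: "x \<in> S" and y: "y \<in> S"
  shows "\<phi> x = \<phi> y"
proof -
  have "\<phi> x = \<phi> (\<lambda>s. if s \<in> A then y s else x s)" if "finite A" for A
    using that
  proof (induction A rule: finite_induct)
    case empty
    show ?case by simp
  next
    case (insert s0 A)
    have "agree_off s0 (\<lambda>s. if s \<in> A then y s else x s) (\<lambda>s. if s \<in> insert s0 A then y s else x s)"
      by (auto simp: agree_off_def)
    then show ?case
      using insert.IH step closed x y by metis
  qed
  from this[of UNIV] show ?thesis
    by simp
qed

text \<open>The denominator \<open>c F2 + d\<close> cannot vanish and, \<open>policies\<close> being connected, has constant sign.\<close>
lemma equivalent_on_if_moebius_relation:
  fixes F1 F2 :: "('s::finite \<Rightarrow> 'a::finite \<Rightarrow> real) \<Rightarrow> real"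
  assumes F2: "continuous_on policies F2"
    and rel: "\<And>\<pi>. \<pi> \<in> policies \<Longrightarrow> F1 \<pi> * (c * F2 \<pi> + d) = a * F2 \<pi> + b"
    and det: "0 < a * d - b * c"
  shows "equivalent_on F1 F2 policies"
proof -
  define D where "D \<pi> = c * F2 \<pi> + d" for \<pi>
  have D_nz: "D \<pi> \<noteq> 0" if \<pi>: "\<pi> \<in> policies" for \<pi>
  proof
    assume D0: "D \<pi> = 0"
    then have N0: "a * F2 \<pi> + b = 0"
      using rel[OF \<pi>] by (simp add: D_def)
    have "(a * d - b * c) * F2 \<pi> = d * (a * F2 \<pi> + b) - b * D \<pi>"
      by (simp add: D_def algebra_simps)
    also have "\<dots> = 0"
      by (simp only: D0 N0 mult_zero_right diff_zero)
    finally have "F2 \<pi> = 0"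
      using det by simp
    then have "b = 0" "d = 0"
      using D0 N0 by (simp_all add: D_def)
    then show False
      using det by simp
  qed
  have conn: "connected (D ` policies)"
    unfolding D_def
    by (intro connected_continuous_image connected_policies
        continuous_on_add[OF continuous_on_mult[OF continuous_on_const F2] continuous_on_const])
  have D_sign: "0 < D x \<longleftrightarrow> 0 < D y" if xy: "x \<in> policies" "y \<in> policies" for x y
  proof (rule ccontr)
    assume "\<not> (0 < D x \<longleftrightarrow> 0 < D y)"
    moreover have "min (D x) (D y) \<in> D ` policies" "max (D x) (D y) \<in> D ` policies"
      using xy by (simp_all add: min_def max_def)
    ultimately have "0 \<in> D ` policies"
      by (auto intro: connectedD_interval[OF conn, of "min (D x) (D y)" "max (D x) (D y)"])
    then show False
      using D_nz by auto
  qed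
  have "F1 x \<ge> F1 y \<longleftrightarrow> F2 x \<ge> F2 y" if x: "x \<in> policies" and y: "y \<in> policies" for x y
  proof -
    define k where "k = D x * D y"
    have k: "0 < k"
      using D_nz[OF x] D_nz[OF y] D_sign[OF x y] by (auto simp: k_def zero_less_mult_iff)
    have "(F1 x - F1 y) * (D x * D y) = (F1 x * D x) * D y - (F1 y * D y) * D x"
      by (simp add: algebra_simps)
    also have "\<dots> = (a * d - b * c) * (F2 x - F2 y)"
      unfolding D_def rel[OF x] rel[OF y] by (simp add: algebra_simps)
    finally have key: "(F1 x - F1 y) * k = (a * d - b * c) * (F2 x - F2 y)"
      by (simp add: k_def)
    have "F1 x \<ge> F1 y \<longleftrightarrow> 0 \<le> (F1 x - F1 y) * k"
      using k by (simp add: zero_le_mult_iff)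
    also have "\<dots> \<longleftrightarrow> 0 \<le> (a * d - b * c) * (F2 x - F2 y)"
      by (simp only: key)
    also have "\<dots> \<longleftrightarrow> F2 x \<ge> F2 y"
      using det by (simp add: zero_le_mult_iff)
    finally show ?thesis .
  qed
  then show ?thesis
    unfolding equivalent_on_def by blast
qed

section \<open>Value inversion\<close>

definition has_value_inversion :: "('p \<Rightarrow> real) \<Rightarrow> ('p \<Rightarrow> real) \<Rightarrow> 'p set \<Rightarrow> bool"
  where "has_value_inversion F1 F2 P \<longleftrightarrow> (\<exists>\<pi>\<in>P. \<exists>\<pi>'\<in>P. F1 \<pi> > F1 \<pi>' \<and> F2 \<pi>' > F2 \<pi>)"

lemma eq_on_curve_if_no_inversion:
  fixes f g :: "real \<Rightarrow> real"
  assumes f: "continuous_on {0..1} f" and g: "strict_mono_on {0..1} g" and \<mu>: "\<mu> \<in> {0<..<1}"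
    and no_inv: "\<And>\<nu>. \<nu> \<in> {0..1} \<Longrightarrow> \<not> (f \<nu> < x \<and> g \<mu> < g \<nu>) \<and> \<not> (x < f \<nu> \<and> g \<nu> < g \<mu>)"
  shows "x = f \<mu>"
proof (rule ccontr)
  assume "x \<noteq> f \<mu>"
  have "isCont f \<mu>"
    using continuous_on_interior[OF f] \<mu> by (simp add: interior_atLeastAtMost_real)
  then have lim: "(f \<longlongrightarrow> f \<mu>) (at \<mu> within S)" for S
    unfolding isCont_def using tendsto_mono[OF at_within_le_at] by blast
  consider "f \<mu> < x" | "x < f \<mu>"
    using \<open>x \<noteq> f \<mu>\<close> by linarith
  then show False
  proof cases
    case 1
    have "\<forall>\<^sub>F \<nu> in at_right \<mu>. f \<nu> < x \<and> \<nu> \<in> {\<mu><..<1}"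
      using order_tendstoD(2)[OF lim 1] eventually_at_right_real[of \<mu> 1] \<mu>
      by (auto intro: eventually_conj)
    then obtain \<nu> where "f \<nu> < x" "\<nu> \<in> {\<mu><..<1}"
      using eventually_happens'[OF trivial_limit_at_right_real] by blast
    moreover have "g \<mu> < g \<nu>"
      using g \<mu> \<open>\<nu> \<in> {\<mu><..<1}\<close> by (auto intro: strict_mono_onD)
    ultimately show False
      using no_inv[of \<nu>] \<mu> by auto
  next
    case 2
    have "\<forall>\<^sub>F \<nu> in at_left \<mu>. x < f \<nu> \<and> \<nu> \<in> {0<..<\<mu>}"
      using order_tendstoD(1)[OF lim 2] eventually_at_left_real[of 0 \<mu>] \<mu>
      by (auto intro: eventually_conj)
    then obtain \<nu> where "x < f \<nu>" "\<nu> \<in> {0<..<\<mu>}"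
      using eventually_happens'[OF trivial_limit_at_left_real] by blast
    moreover have "g \<nu> < g \<mu>"
      using g \<mu> \<open>\<nu> \<in> {0<..<\<mu>}\<close> by (auto intro: strict_mono_onD)
    ultimately show False
      using no_inv[of \<nu>] \<mu> by auto
  qed
qed

lemma near_midpoint_on_curve:
  fixes F1 F2 :: "('s::finite \<Rightarrow> 'a::finite \<Rightarrow> real) \<Rightarrow> real" and p q :: "'s \<Rightarrow> 'a \<Rightarrow> real"
  defines "f \<equiv> \<lambda>\<mu>. F1 (interp p q \<mu>)" and "g \<equiv> \<lambda>\<mu>. F2 (interp p q \<mu>)"
  assumes F2: "continuous_on policies F2" and no_inv: "\<not> has_value_inversion F1 F2 P"
    and p: "p \<in> policies" and q: "q \<in> policies" and seg: "\<forall>\<mu>\<in>{0..1}. interp p q \<mu> \<in> P"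
    and \<epsilon>: "0 < \<epsilon>" and box: "policies \<inter> sup_ball (interp p q (1/2)) \<epsilon> \<subseteq> P"
    and f: "continuous_on {0..1} f" and g: "continuous_on {0..1} g" "strict_mono_on {0..1} g"
  shows "\<exists>\<delta>>0. \<forall>\<pi>\<in>policies \<inter> sup_ball (interp p q (1/2)) \<delta>. \<exists>\<mu>\<in>{0..1}. F1 \<pi> = f \<mu> \<and> F2 \<pi> = g \<mu>"
proof -
  define w where "w = interp p q (1/2)"
  have w: "w \<in> policies"
    using interp_in_policies[OF p q] by (simp add: w_def)
  define e where "e = min (g (1/2) - g 0) (g 1 - g (1/2))"
  have "0 < e"
    using strict_mono_onD[OF g(2), of 0 "1/2"] strict_mono_onD[OF g(2), of "1/2" 1] by (simp add: e_def)
  then obtain \<delta>' where \<delta>': "0 < \<delta>'" "\<forall>\<pi>\<in>policies \<inter> sup_ball w \<delta>'. \<bar>F2 \<pi> - F2 w\<bar> < e"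
    using continuous_on_sup_ball[OF F2 w] by blast
  define \<delta> where "\<delta> = min \<epsilon> \<delta>'"
  have "\<exists>\<mu>\<in>{0..1}. F1 \<pi> = f \<mu> \<and> F2 \<pi> = g \<mu>" if \<pi>: "\<pi> \<in> policies \<inter> sup_ball w \<delta>" for \<pi>
  proof -
    have "\<pi> \<in> P"
      using \<pi> box sup_ball_mono[of \<pi> w \<delta> \<epsilon>] by (auto simp: \<delta>_def w_def)
    have "\<bar>F2 \<pi> - g (1/2)\<bar> < e"
      using \<pi> \<delta>' sup_ball_mono[of \<pi> w \<delta> \<delta>'] by (auto simp: \<delta>_def w_def g_def)
    then have between: "g 0 < F2 \<pi>" "F2 \<pi> < g 1"
      by (auto simp: e_def)
    then obtain \<mu> where \<mu>: "0 \<le> \<mu>" "\<mu> \<le> 1" "g \<mu> = F2 \<pi>"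
      using IVT'[of g 0 "F2 \<pi>" 1, OF _ _ _ g(1)] by auto
    with between have \<mu>01: "\<mu> \<in> {0<..<1}"
      by (auto simp: less_le)
    have "F1 \<pi> = f \<mu>"
    proof (rule eq_on_curve_if_no_inversion[OF f g(2) \<mu>01])
      fix \<nu> :: real assume "\<nu> \<in> {0..1}"
      then have "interp p q \<nu> \<in> P"
        using seg by blast
      then show "\<not> (f \<nu> < F1 \<pi> \<and> g \<mu> < g \<nu>) \<and> \<not> (F1 \<pi> < f \<nu> \<and> g \<nu> < g \<mu>)"
        using no_inv \<open>\<pi> \<in> P\<close> \<mu>(3) unfolding has_value_inversion_def f_def g_def by auto
    qed
    with \<mu>01 \<mu>(3) show ?thesis
      by auto
  qed
  moreover have "0 < \<delta>"
    using \<epsilon> \<delta>' by (simp add: \<delta>_def)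
  ultimately show ?thesis
    unfolding w_def by blast
qed

lemma equivalent_on_if_no_inversion_near_segment:
  fixes F1 F2 :: "('s::finite \<Rightarrow> 'a::finite \<Rightarrow> real) \<Rightarrow> real"
  assumes F1: "regular_objective F1" and F2: "regular_objective F2"
    and no_inv: "\<not> has_value_inversion F1 F2 P"
    and p: "p \<in> policies" and q: "q \<in> policies" and pq: "agree_off s0 p q"
    and seg: "\<forall>\<mu>\<in>{0..1}. interp p q \<mu> \<in> P"
    and \<epsilon>: "0 < \<epsilon>" and box: "policies \<inter> sup_ball (interp p q (1/2)) \<epsilon> \<subseteq> P"
    and less: "F2 p < F2 q" and nontrivial: "\<not> trivial_on F1 policies"
  shows "equivalent_on F1 F2 policies"
proof -
  define w where "w = interp p q (1/2)"
  have w: "w \<in> policies"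
    using interp_in_policies[OF p q] by (simp add: w_def)
  have lf1: "linear_fractional_01 (\<lambda>\<mu>. F1 (interp p q \<mu>))"
    and lf2: "linear_fractional_01 (\<lambda>\<mu>. F2 (interp p q \<mu>))"
    using F1 F2 p q pq unfolding regular_objective_def by blast+
  obtain a1 c1 b1 where h1: "\<forall>\<mu>\<in>{0..1}. 0 < 1 + b1 * \<mu> \<and> F1 (interp p q \<mu>) = (a1 + c1 * \<mu>) / (1 + b1 * \<mu>)"
    using lf1 unfolding linear_fractional_01_def by blast
  obtain a2 c2 b2 where h2: "\<forall>\<mu>\<in>{0..1}. 0 < 1 + b2 * \<mu> \<and> F2 (interp p q \<mu>) = (a2 + c2 * \<mu>) / (1 + b2 * \<mu>)"
    using lf2 unfolding linear_fractional_01_def by blast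
  note sgn1 = linear_fractional_01_sgn_diff[OF h1] and sgn2 = linear_fractional_01_sgn_diff[OF h2]
  have "0 < c2 - a2 * b2"
    using sgn2[of 0 1] less by (simp add: sgn_if split: if_splits)
  then have mono2: "strict_mono_on {0..1} (\<lambda>\<mu>. F2 (interp p q \<mu>))"
    using sgn2 by (intro strict_mono_onI) (force simp: sgn_if split: if_splits)
  obtain \<delta> where \<delta>: "0 < \<delta>" and curve: "\<forall>\<pi>\<in>policies \<inter> sup_ball w \<delta>.
      \<exists>\<mu>\<in>{0..1}. F1 \<pi> = F1 (interp p q \<mu>) \<and> F2 \<pi> = F2 (interp p q \<mu>)"
    using near_midpoint_on_curve[OF _ no_inv p q seg \<epsilon> box continuous_on_linear_fractional_01[OF lf1]
        continuous_on_linear_fractional_01[OF lf2] mono2] F2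
    unfolding w_def regular_objective_def by blast
  \<comment> \<open>\<open>F1\<close> decreases, is constant or increases along the segment\<close>
  consider (dec) "c1 - a1 * b1 < 0" | (const) "c1 - a1 * b1 = 0" | (inc) "0 < c1 - a1 * b1"
    by linarith
  then show ?thesis
  proof cases
    case dec
    then have "F1 q < F1 p"
      using sgn1[of 0 1] by (simp add: sgn_if split: if_splits)
    moreover have "p \<in> P" "q \<in> P"
      using seg by (metis atLeastAtMost_iff interp_0 interp_1 order_refl zero_le_one)+
    ultimately show ?thesis
      using no_inv less unfolding has_value_inversion_def by blast
  next
    case const
    have "F1 (interp p q \<mu>) = F1 p" if "\<mu> \<in> {0..1}" for \<mu>
      using sgn1[of 0 \<mu>] that const by (cases "\<mu> = 0") (auto simp: sgn_0_0)
    then have "\<forall>\<pi>\<in>policies \<inter> sup_ball w \<delta>. F1 \<pi> * (0 * F2 \<pi> + 1) = 0 * F2 \<pi> + F1 p"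
      using curve by fastforce
    then have "\<forall>\<pi>\<in>policies. F1 \<pi> * (0 * F2 \<pi> + 1) = 0 * F2 \<pi> + F1 p"
      by (rule moebius_relation_propagates[OF F1 F2 w \<delta>])
    then show ?thesis
      using nontrivial by (simp add: trivial_on_def)
  next
    case inc
    obtain a b c d where det: "a * d - b * c = (c1 - a1 * b1) * (c2 - a2 * b2)"
      and near: "\<forall>\<pi>\<in>policies \<inter> sup_ball w \<delta>. F1 \<pi> * (c * F2 \<pi> + d) = a * F2 \<pi> + b"
      using moebius_relation_on_curve[OF h1 h2 curve] by blast
    from near have "\<forall>\<pi>\<in>policies. F1 \<pi> * (c * F2 \<pi> + d) = a * F2 \<pi> + b"
      by (rule moebius_relation_propagates[OF F1 F2 w \<delta>])
    moreover have "0 < a * d - b * c"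
      using det inc \<open>0 < c2 - a2 * b2\<close> by simp
    ultimately show ?thesis
      using F2 unfolding regular_objective_def by (blast intro: equivalent_on_if_moebius_relation)
  qed
qed

lemma agree_off_pair_with_distinct_values:
  fixes F :: "('s::finite \<Rightarrow> 'a::finite \<Rightarrow> real) \<Rightarrow> real"
  assumes F: "regular_objective F" and u: "u \<in> policies" and r: "0 < r"
    and nontrivial: "\<not> trivial_on F policies"
  shows "\<exists>x y s. x \<in> policies \<inter> sup_ball u r \<and> y \<in> policies \<inter> sup_ball u r \<and> agree_off s x y \<and> F x < F y"
proof -
  let ?B = "policies \<inter> sup_ball u r"
  have "\<exists>x\<in>?B. F x \<noteq> F u"
  proof (rule ccontr)
    assume "\<not> ?thesis"
    then have "\<forall>\<pi>\<in>?B. F \<pi> * (0 * F \<pi> + 1) = 0 * F \<pi> + F u"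
      by simp
    then have "\<forall>\<pi>\<in>policies. F \<pi> * (0 * F \<pi> + 1) = 0 * F \<pi> + F u"
      by (rule moebius_relation_propagates[OF F F u r])
    then show False
      using nontrivial by (simp add: trivial_on_def)
  qed
  then obtain x0 where x0: "x0 \<in> ?B" "F x0 \<noteq> F u"
    by blast
  have "\<exists>x y s. x \<in> ?B \<and> y \<in> ?B \<and> agree_off s x y \<and> F x \<noteq> F y"
  proof (rule ccontr)
    assume no_step: "\<not> ?thesis"
    have closed: "(\<lambda>s. if s \<in> A then y s else x s) \<in> ?B" if "x \<in> ?B" "y \<in> ?B" for x y A
      using that by (simp add: policies_def sup_ball_def)
    have step: "F x = F y" if "x \<in> ?B" "y \<in> ?B" "agree_off s x y" for x y s
      using that no_step by blast
    have "u \<in> ?B"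
      using u r by (simp add: sup_ball_def)
    then have "F x0 = F u"
      using eq_by_one_state_steps[where S = ?B and \<phi> = F and x = x0 and y = u] closed step x0(1) by blast
    then show False
      using x0(2) by simp
  qed
  then obtain x y s where xy: "x \<in> ?B" "y \<in> ?B" "agree_off s x y" and "F x \<noteq> F y"
    by blast
  then consider "F x < F y" | "F y < F x"
    by linarith
  then show ?thesis
  proof cases
    case 1
    with xy show ?thesis by blast
  next
    case 2
    moreover have "agree_off s y x"
      using xy(3) by (simp add: agree_off_def)
    ultimately show ?thesis
      using xy(1,2) by blast
  qed
qed

lemma has_value_inversion_if_regular:
  fixes F1 F2 :: "('s::finite \<Rightarrow> 'a::finite \<Rightarrow> real) \<Rightarrow> real"
  assumes F1: "regular_objective F1" and F2: "regular_objective F2" and P: "P \<subseteq> policies"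
    and u: "u \<in> policies" and \<epsilon>: "0 < \<epsilon>" and ball: "policies \<inter> sup_ball u \<epsilon> \<subseteq> P"
    and nontrivial1: "\<not> trivial_on F1 P" and nontrivial2: "\<not> trivial_on F2 P"
    and not_equivalent: "\<not> equivalent_on F1 F2 P"
  shows "has_value_inversion F1 F2 P"
proof (rule ccontr)
  assume no_inv: "\<not> has_value_inversion F1 F2 P"
  have "\<not> trivial_on F2 policies"
    using nontrivial2 P by (auto simp: trivial_on_def)
  moreover have "0 < \<epsilon>/2"
    using \<epsilon> by simp
  ultimately obtain x y s where x: "x \<in> policies \<inter> sup_ball u (\<epsilon>/2)" and y: "y \<in> policies \<inter> sup_ball u (\<epsilon>/2)"
    and xy: "agree_off s x y" and less: "F2 x < F2 y"
    using agree_off_pair_with_distinct_values[OF F2 u] by blast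
  have seg: "interp x y \<mu> \<in> P" if "\<mu> \<in> {0..1}" for \<mu>
  proof -
    have "interp x y \<mu> \<in> sup_ball u (\<epsilon>/2)"
      using x y that by (intro interp_in_sup_ball) auto
    then have "interp x y \<mu> \<in> sup_ball u \<epsilon>"
      by (rule sup_ball_mono) (use \<epsilon> in simp)
    moreover have "interp x y \<mu> \<in> policies"
      using x y that by (intro interp_in_policies) auto
    ultimately show ?thesis
      using ball by blast
  qed
  have box: "policies \<inter> sup_ball (interp x y (1/2)) (\<epsilon>/2) \<subseteq> P"
  proof
    fix \<pi> assume \<pi>: "\<pi> \<in> policies \<inter> sup_ball (interp x y (1/2)) (\<epsilon>/2)"
    have "interp x y (1/2) \<in> sup_ball u (\<epsilon>/2)"
      using x y by (intro interp_in_sup_ball) auto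
    with \<pi> have "\<pi> \<in> sup_ball u (\<epsilon>/2 + \<epsilon>/2)"
      by (intro sup_ball_triangle) auto
    with \<pi> show "\<pi> \<in> P"
      using ball by auto
  qed
  have "\<not> trivial_on F1 policies"
    using nontrivial1 P by (auto simp: trivial_on_def)
  with x y seg box less \<open>0 < \<epsilon>/2\<close> have "equivalent_on F1 F2 policies"
    using equivalent_on_if_no_inversion_near_segment[OF F1 F2 no_inv _ _ xy] by blast
  then show False
    using not_equivalent P by (auto simp: equivalent_on_def)
qed

theorem mainTheorem10:
  fixes T1 T2 :: "'s::finite \<Rightarrow> 'a::finite \<Rightarrow> 's \<Rightarrow> real"
    and R1 R2 :: "'s \<Rightarrow> 'a \<Rightarrow> real"
    and d0 :: "'s \<Rightarrow> real" and \<gamma> :: real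
    and P U :: "('s \<Rightarrow> 'a \<Rightarrow> real) set"
  assumes "CARD('a) > 1"
    and "valid_mdp T1 d0 \<gamma>" and "valid_mdp T2 d0 \<gamma>"
    and "T1 = T2 \<or> R1 = R2"
    and "P \<subseteq> policies"
    and "U \<noteq> {}" and "U \<subseteq> P" and "openin (top_of_set policies_pos) U"
    and "\<not> trivial_on (J T1 d0 R1 \<gamma>) P" and "\<not> trivial_on (J T2 d0 R2 \<gamma>) P"
    and "\<not> equivalent_on (J T1 d0 R1 \<gamma>) (J T2 d0 R2 \<gamma>) P"
  shows "\<exists>\<pi>\<in>P. \<exists>\<pi>'\<in>P. J T1 d0 R1 \<gamma> \<pi> > J T1 d0 R1 \<gamma> \<pi>'
                       \<and> J T2 d0 R2 \<gamma> \<pi>' > J T2 d0 R2 \<gamma> \<pi>"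
proof -
  have mdp1: "is_transition T1" "is_dist d0" "0 \<le> \<gamma>" "\<gamma> < 1" and mdp2: "is_transition T2"
    using assms(2,3) by (auto simp: valid_mdp_def)
  obtain u where u: "u \<in> U"
    using assms(6) by blast
  then obtain \<epsilon> where "0 < \<epsilon>" "policies \<inter> sup_ball u \<epsilon> \<subseteq> P"
    using openin_policies_pos_sup_ball[OF assms(8)] assms(7) by blast
  moreover have "u \<in> policies"
    using u assms(5,7) by blast
  ultimately have "has_value_inversion (J T1 d0 R1 \<gamma>) (J T2 d0 R2 \<gamma>) P"
    using has_value_inversion_if_regular[OF regular_objective_J[OF mdp1] regular_objective_J[OF mdp2 mdp1(2-4)]]
      assms(5,9-11) by blast
  then show ?thesis
    unfolding has_value_inversion_def .
qed

end
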